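(* Let $(S,+)$ be a semigroup with no idempotent element and of cardinality $\kappa>\omega$. Let $\mu$ be a cardinal with $\omega<\mu\le\kappa$ such that there is a family of $\lambda$ almost disjoint subsets of $\mu$, and let $A\subseteq S$ be an IP set with $|A|=\mu$. Then $A$ contains a family of $\lambda$ almost disjoint subsets each of which is an IP set.
   Context: For an infinite set $X$, a family $\mathcal{A}$ is a family of almost disjoint subsets of $X$ if each $B\in\mathcal{A}$ satisfies $B\subseteq X$ and $|B|=|X|$, and for distinct $B,C\in\mathcal{A}$, $|B\cap C|<|X|$. $e$ is idempotent if $e+e=e$. $A\subseteq S$ is an IP set if there is a sequence $\langle x_n\rangle_{n=1}^\infty$ in $S$ with all finite sums $\sum_{n\in H}x_n$ (increasing order, $H$ a nonempty finite subset of $\mathbb{N}$) in $A$. *)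

theory Defs
  imports Main "HOL-Library.Equipollence" "HOL-Library.Countable_Set"
begin

definition almost_disjoint_family :: "'a set \<Rightarrow> 'a set set \<Rightarrow> bool" where
  "almost_disjoint_family X F \<longleftrightarrow>
     (\<forall>B\<in>F. B \<subseteq> X \<and> B \<approx> X) \<and>
     (\<forall>B\<in>F. \<forall>C\<in>F. B \<noteq> C \<longrightarrow> B \<inter> C \<prec> X)"

definition fin_sum :: "(nat \<Rightarrow> 'a::semigroup_add) \<Rightarrow> nat set \<Rightarrow> 'a" where
  "fin_sum x H = (let l = map x (sorted_list_of_set H) in foldl (+) (hd l) (tl l))"

definition IP_set :: "'a::semigroup_add set \<Rightarrow> bool" where
  "IP_set A \<longleftrightarrow> (\<exists>x :: nat \<Rightarrow> 'a.
     \<forall>H. finite H \<and> H \<noteq> {} \<and> H \<subseteq> {1..} \<longrightarrow> fin_sum x H \<in> A)"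

end

theory Submission
  imports Defs
begin

text \<open>A contains the countable IP set C of finite sums of a sequence witnessing that A is an IP set.
  As A is uncountable, A - C still has the cardinality of M, so a bijection carries L to an
  almost disjoint family on A - C. Adjoining the small set C to every member keeps the family
  almost disjoint and turns every member into an IP set.\<close>

unbundle cardinal_syntax

lemma lepoll_iff_card_of_ordLeq: "A \<lesssim> B \<longleftrightarrow> |A| \<le>o |B|"
  unfolding lepoll_def card_of_ordLeq[symmetric] ..

lemma lesspoll_iff_card_of_ordLess: "A \<prec> B \<longleftrightarrow> |A| <o |B|"
  unfolding lesspoll_def lepoll_iff_card_of_ordLeq eqpoll_iff_card_of_ordIso
  using ordLeq_iff_ordLess_or_ordIso not_ordLess_ordIso by blast

lemma Un_lepoll_infinite:
  assumes "infinite X" "A \<lesssim> X" "B \<lesssim> X"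
  shows "A \<union> B \<lesssim> X"
  using assms card_of_Un_ordLeq_infinite_Field[of "|X|" A B]
  by (simp add: lepoll_iff_card_of_ordLeq card_of_card_order_on Field_card_of)

lemma Un_lesspoll_infinite:
  assumes "infinite X" "A \<prec> X" "B \<prec> X"
  shows "A \<union> B \<prec> X"
  using assms card_of_Un_ordLess_infinite by (simp add: lesspoll_iff_card_of_ordLess)

lemma Un_eqpoll_infinite:
  assumes "infinite X" "C \<lesssim> X"
  shows "C \<union> X \<approx> X"
  using assms by (simp add: Un_lepoll_infinite lepoll_antisym subset_imp_lepoll)

lemma countable_lesspoll_uncountable:
  assumes "countable C" "uncountable X"
  shows "C \<prec> X"
proof -
  have "C \<lesssim> (UNIV :: nat set)"
    using assms(1) unfolding countable_def lepoll_def by blast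
  also have "(UNIV :: nat set) \<lesssim> X"
    using assms(2) by (intro infinite_le_lepoll[THEN iffD1]) (auto dest: countable_finite)
  finally have "C \<lesssim> X" .
  moreover have "\<not> C \<approx> X"
    using assms countable_eqpoll[OF assms(1)] eqpoll_sym by blast
  ultimately show ?thesis unfolding lesspoll_def ..
qed

lemma Diff_countable_eqpoll:
  assumes "uncountable X" "countable C"
  shows "X - C \<approx> X"
proof -
  have "uncountable (X - C)"
    using assms by (metis Un_Diff_cancel2 countable_Un countable_subset sup_ge1)
  then have "C \<union> (X - C) \<approx> X - C"
    using assms(2) by (intro Un_eqpoll_infinite lesspoll_imp_lepoll countable_lesspoll_uncountable)
      (auto dest: countable_finite)
  moreover have "X \<subseteq> C \<union> (X - C)" by blast
  ultimately have "X \<lesssim> X - C"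
    using subset_imp_lepoll eqpoll_imp_lepoll lepoll_trans by metis
  then show ?thesis by (simp add: lepoll_antisym subset_imp_lepoll)
qed

lemma almost_disjoint_family_bij_betw_image:
  assumes g: "bij_betw g X Y" and ad: "almost_disjoint_family X L"
  shows "almost_disjoint_family Y (image g ` L)" and "image g ` L \<approx> L"
proof -
  have inj: "inj_on g X" and img: "g ` X = Y" using g by (auto simp: bij_betw_def)
  have L: "B \<subseteq> X" "B \<approx> X" if "B \<in> L" for B
    using ad that unfolding almost_disjoint_family_def by auto
  have eqpoll_image: "g ` B \<approx> B" if "B \<subseteq> X" for B
    using inj that by (meson inj_on_image_eqpoll_self inj_on_subset)
  have "X \<approx> Y" using g eqpoll_def by blast
  show "almost_disjoint_family Y (image g ` L)"
    unfolding almost_disjoint_family_def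
  proof (intro conjI ballI impI)
    fix E assume "E \<in> image g ` L"
    then obtain B where "B \<in> L" and E: "E = g ` B" by blast
    show "E \<subseteq> Y" using E L[OF \<open>B \<in> L\<close>] img by blast
    have "g ` B \<approx> X" using L[OF \<open>B \<in> L\<close>] eqpoll_image eqpoll_trans by metis
    then show "E \<approx> Y" unfolding E using \<open>X \<approx> Y\<close> by (rule eqpoll_trans)
  next
    fix E E' assume "E \<in> image g ` L" "E' \<in> image g ` L" "E \<noteq> E'"
    then obtain B B' where B: "B \<in> L" "B' \<in> L" "B \<noteq> B'" and E: "E = g ` B" "E' = g ` B'"
      by blast
    have "E \<inter> E' = g ` (B \<inter> B')"
      unfolding E using inj_on_image_Int[OF inj] L B by simp
    also have "\<dots> \<approx> B \<inter> B'" using L B by (intro eqpoll_image) auto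
    also have "B \<inter> B' \<prec> X" using ad B unfolding almost_disjoint_family_def by blast
    also note \<open>X \<approx> Y\<close>
    finally show "E \<inter> E' \<prec> Y" .
  qed
  have "inj_on (image g) L"
    using inj_on_subset[OF inj_on_image_Pow[OF inj]] L by blast
  then show "image g ` L \<approx> L" by (rule inj_on_image_eqpoll_self)
qed

lemma almost_disjoint_family_Un_lesspoll:
  assumes X: "infinite X" and C: "C \<prec> X" "C \<inter> X = {}"
    and ad: "almost_disjoint_family X L"
  shows "almost_disjoint_family (C \<union> X) ((\<union>) C ` L)" and "(\<union>) C ` L \<approx> L"
proof -
  have L: "B \<subseteq> X" "B \<approx> X" if "B \<in> L" for B
    using ad that unfolding almost_disjoint_family_def by auto
  have CX: "C \<union> X \<approx> X" using X C by (simp add: Un_eqpoll_infinite lesspoll_imp_lepoll)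
  show "almost_disjoint_family (C \<union> X) ((\<union>) C ` L)"
    unfolding almost_disjoint_family_def
  proof (intro conjI ballI impI)
    fix E assume "E \<in> (\<union>) C ` L"
    then obtain B where "B \<in> L" and E: "E = C \<union> B" by blast
    note B = L[OF \<open>B \<in> L\<close>]
    show "E \<subseteq> C \<union> X" using E B by blast
    have "infinite B" using eqpoll_finite_iff[OF B(2)] X by simp
    moreover have "C \<lesssim> B"
      using lesspoll_eq_trans[OF C(1) eqpoll_sym[OF B(2)]] by (rule lesspoll_imp_lepoll)
    ultimately have "E \<approx> B" unfolding E by (rule Un_eqpoll_infinite)
    also have "B \<approx> C \<union> X" using B(2) eqpoll_sym[OF CX] by (rule eqpoll_trans)
    finally show "E \<approx> C \<union> X" .
  next
    fix E E' assume "E \<in> (\<union>) C ` L" "E' \<in> (\<union>) C ` L" "E \<noteq> E'"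
    then obtain B B' where B: "B \<in> L" "B' \<in> L" "B \<noteq> B'" and E: "E = C \<union> B" "E' = C \<union> B'"
      by blast
    have "B \<inter> B' \<prec> X" using ad B unfolding almost_disjoint_family_def by blast
    then have "E \<inter> E' \<prec> X" unfolding E Un_Int_distrib[symmetric]
      by (rule Un_lesspoll_infinite[OF X C(1)])
    then show "E \<inter> E' \<prec> C \<union> X" using eqpoll_sym[OF CX] by (rule lesspoll_eq_trans)
  qed
  have "inj_on ((\<union>) C) L"
  proof (rule inj_onI)
    fix B B' assume "B \<in> L" "B' \<in> L" "C \<union> B = C \<union> B'"
    moreover have "B \<inter> C = {}" "B' \<inter> C = {}" using L \<open>B \<in> L\<close> \<open>B' \<in> L\<close> C(2) by blast+
    ultimately show "B = B'" by blast
  qed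
  then show "(\<union>) C ` L \<approx> L" by (rule inj_on_image_eqpoll_self)
qed

lemma IP_set_mono:
  assumes "IP_set A" "A \<subseteq> B"
  shows "IP_set B"
  using assms unfolding IP_set_def by (meson subsetD)

lemma IP_set_countable_subset:
  assumes "IP_set A"
  shows "\<exists>C \<subseteq> A. countable C \<and> IP_set C"
proof -
  obtain x :: "nat \<Rightarrow> 'a" where x: "\<And>H. finite H \<and> H \<noteq> {} \<and> H \<subseteq> {1..} \<Longrightarrow> fin_sum x H \<in> A"
    using assms unfolding IP_set_def by blast
  define C where "C = fin_sum x ` {H. finite H \<and> H \<noteq> {} \<and> H \<subseteq> {1..}}"
  have "countable C" unfolding C_def
    by (rule countable_image, rule countable_subset[OF _ countable_Collect_finite]) auto
  moreover have "IP_set C" unfolding IP_set_def C_def by (intro exI[of _ x]) blast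
  moreover have "C \<subseteq> A" using x unfolding C_def by blast
  ultimately show ?thesis by blast
qed

theorem theorem2p8:
  fixes A :: "'a::semigroup_add set"
    and M :: "'b set"
    and L :: "'b set set"
  assumes no_idem: "\<forall>e::'a. e + e \<noteq> e"
    and kappa_uncountable: "uncountable (UNIV :: 'a set)"
    and mu_uncountable: "uncountable M"
    and mu_le_kappa: "M \<lesssim> (UNIV :: 'a set)"
    and ad_mu: "almost_disjoint_family M L"
    and IP: "IP_set A"
    and card_A: "A \<approx> M"
  shows "\<exists>F :: 'a set set. F \<approx> L \<and> almost_disjoint_family A F \<and> (\<forall>B\<in>F. IP_set B)"
proof -
  obtain C where "C \<subseteq> A" "countable C" "IP_set C"
    using IP_set_countable_subset[OF IP] by blast
  have "uncountable A"
    using mu_uncountable countable_eqpoll[OF _ eqpoll_sym[OF card_A]] by blast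
  then have "A - C \<approx> A" using \<open>countable C\<close> by (rule Diff_countable_eqpoll)
  then have "M \<approx> A - C" using eqpoll_sym[OF eqpoll_trans] card_A by blast
  then obtain g where "bij_betw g M (A - C)" unfolding eqpoll_def ..
  note L' = almost_disjoint_family_bij_betw_image[OF this ad_mu]
  have "uncountable (A - C)"
    using mu_uncountable countable_eqpoll[OF _ \<open>M \<approx> A - C\<close>] by blast
  then have "C \<prec> A - C" using \<open>countable C\<close> countable_lesspoll_uncountable by blast
  moreover have "infinite (A - C)" using \<open>uncountable (A - C)\<close> countable_finite by blast
  ultimately have F: "almost_disjoint_family (C \<union> (A - C)) ((\<union>) C ` image g ` L)"
    "(\<union>) C ` image g ` L \<approx> image g ` L"
    using almost_disjoint_family_Un_lesspoll[OF _ _ _ L'(1)] by blast+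
  have "C \<union> (A - C) = A" using \<open>C \<subseteq> A\<close> by blast
  then have "almost_disjoint_family A ((\<union>) C ` image g ` L)" using F(1) by simp
  moreover have "(\<union>) C ` image g ` L \<approx> L" using F(2) L'(2) by (rule eqpoll_trans)
  moreover have "\<forall>B \<in> (\<union>) C ` image g ` L. IP_set B"
    using IP_set_mono[OF \<open>IP_set C\<close>] by blast
  ultimately show ?thesis by blast
qed

end
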